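(* Let $\mathcal L:\mathbb F^{q\times q}\to\mathbb F^{n\times n}$ be $*$-linear with matricization $L$ and Choi matrix $\mathbb L$, let $m=\operatorname{rank}\mathbb L$, choose $L_1,\ldots,L_m\in\mathbb F^{n\times q}$ with $\operatorname{span}\{L_1,\ldots,L_m\}=\operatorname{span}\{L_{ij}\}$, and let $A_1,\ldots,A_m$ and $\mathbb H=\mathbb H(\mathcal L;L_1,\ldots,L_m)$ be given by the construction below. Then $$\mathcal L(V)=\sum_{k,l=1}^m\mathbb H_{kl}A_lVA_k^*\ (V\in\mathbb F^{q\times q}),\qquad L=\sum_{k,l=1}^m\mathbb H_{kl}\,\overline{A_k}\otimes A_l,$$ $$\mathbb L=\sum_{k,l=1}^m\mathbb H_{kl}\operatorname{vec}_{n\times q}(A_l)\operatorname{vec}_{n\times q}(\overline{A_k})^T=\widehat A^*\mathbb H^T\widehat A,$$ where $\widehat A^*=[\operatorname{vec}_{n\times q}(A_1)\ \cdots\ \operatorname{vec}_{n\times q}(A_m)]\in\mathbb F^{nq\times m}$. Moreover $\mathbb H$ is Hermitian and invertible.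
   Context: $\mathbb F\in\{\mathbb R,\mathbb C\}$; $\otimes$ Kronecker product, $\circ$ Hadamard product, $\vec{\mathbf 1}_p$ all-ones vector, $\overline{X}$ entrywise conjugate, $\operatorname{vec}$ column-stacking vectorization. For linear $\mathcal L:\mathbb F^{q\times q}\to\mathbb F^{n\times n}$: matricization $L\in\mathbb F^{n^2\times q^2}$ with $L\operatorname{vec}(V)=\operatorname{vec}(\mathcal L(V))$, in blocks $L=[L_{ij}]$, $1\le i\le n$, $1\le j\le q$, $L_{ij}\in\mathbb F^{n\times q}$; Choi matrix $\mathbb L=[\mathcal L(\mathcal E^{(q)}_{ij})]_{i,j=1}^q$. $*$-linear: $\mathcal L(V^* )=\mathcal L(V)^*$. Construction: with $m=\operatorname{rank}\mathbb L=\dim\operatorname{span}\{L_{ij}\}$ and $L_1,\ldots,L_m$ spanning $\operatorname{span}\{L_{ij}\}$, let $L_{ij}=\sum_k\alpha^{ij}_kL_k$ (unique) and $L_k=\sum_{i,j}\beta^k_{ij}L_{ij}$ (any choice of scalars); $A_k$ has $(i,j)$ entry $\overline{\alpha^{ij}_k}$, $B_k$ has $(i,j)$ entry $\beta^k_{ij}$, and $\mathbb H(\mathcal L;L_1,\ldots,L_m)=[\vec{\mathbf 1}_n^*(B_k\circ\overline{L_l})\vec{\mathbf 1}_q]_{k,l=1}^m$. *)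

theory Defs
  imports "Jordan_Normal_Form.DL_Rank" "Jordan_Normal_Form.Schur_Decomposition"
begin

(* F is rendered as a type 'a :: conjugatable_field (instances: real with
   conjugate = id, complex with conjugate = cnj).  All indices are 0-based. *)

definition mconj :: "'a :: conjugatable_field mat \<Rightarrow> 'a mat" where
  "mconj A = map_mat conjugate A"

definition vecm :: "'a mat \<Rightarrow> 'a vec" where
  "vecm A = vec (dim_row A * dim_col A) (\<lambda>k. A $$ (k mod dim_row A, k div dim_row A))"

definition kron :: "'a :: times mat \<Rightarrow> 'a mat \<Rightarrow> 'a mat" where
  "kron A B = mat (dim_row A * dim_row B) (dim_col A * dim_col B)
     (\<lambda>(i,j). A $$ (i div dim_row B, j div dim_col B) * B $$ (i mod dim_row B, j mod dim_col B))"

definition hadamard :: "'a :: times mat \<Rightarrow> 'a mat \<Rightarrow> 'a mat" where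
  "hadamard A B = mat (dim_row A) (dim_col A) (\<lambda>(i,j). A $$ (i,j) * B $$ (i,j))"

definition outer :: "'a :: times vec \<Rightarrow> 'a vec \<Rightarrow> 'a mat" where
  "outer u v = mat (dim_vec u) (dim_vec v) (\<lambda>(i,j). u $ i * v $ j)"

definition unit_mat :: "nat \<Rightarrow> nat \<Rightarrow> nat \<Rightarrow> 'a :: zero_neq_one mat" where
  "unit_mat q i j = mat q q (\<lambda>(a,b). if a = i \<and> b = j then 1 else 0)"

definition msum :: "nat \<Rightarrow> nat \<Rightarrow> ('i \<Rightarrow> 'a :: comm_monoid_add mat) \<Rightarrow> 'i set \<Rightarrow> 'a mat" where
  "msum r c f I = mat r c (\<lambda>(a,b). \<Sum>i\<in>I. f i $$ (a,b))"

definition is_linear_map :: "nat \<Rightarrow> nat \<Rightarrow> ('a :: field mat \<Rightarrow> 'a mat) \<Rightarrow> bool" where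
  "is_linear_map q n \<L> \<longleftrightarrow>
     (\<forall>V \<in> carrier_mat q q. \<L> V \<in> carrier_mat n n) \<and>
     (\<forall>V \<in> carrier_mat q q. \<forall>W \<in> carrier_mat q q. \<L> (V + W) = \<L> V + \<L> W) \<and>
     (\<forall>c. \<forall>V \<in> carrier_mat q q. \<L> (c \<cdot>\<^sub>m V) = c \<cdot>\<^sub>m \<L> V)"

definition star_linear :: "nat \<Rightarrow> nat \<Rightarrow> ('a :: conjugatable_field mat \<Rightarrow> 'a mat) \<Rightarrow> bool" where
  "star_linear q n \<L> \<longleftrightarrow> is_linear_map q n \<L> \<and>
     (\<forall>V \<in> carrier_mat q q. \<L> (mat_adjoint V) = mat_adjoint (\<L> V))"

definition is_matricization :: "nat \<Rightarrow> nat \<Rightarrow> ('a :: comm_ring_1 mat \<Rightarrow> 'a mat) \<Rightarrow> 'a mat \<Rightarrow> bool" where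
  "is_matricization q n \<L> L \<longleftrightarrow> L \<in> carrier_mat (n*n) (q*q) \<and>
     (\<forall>V \<in> carrier_mat q q. L *\<^sub>v vecm V = vecm (\<L> V))"

definition blk :: "nat \<Rightarrow> nat \<Rightarrow> 'a mat \<Rightarrow> nat \<Rightarrow> nat \<Rightarrow> 'a mat" where
  "blk n q L i j = mat n q (\<lambda>(r,s). L $$ (i*n + r, j*q + s))"

definition choi :: "nat \<Rightarrow> nat \<Rightarrow> ('a :: zero_neq_one mat \<Rightarrow> 'a mat) \<Rightarrow> 'a mat" where
  "choi q n \<L> = mat (q*n) (q*n) (\<lambda>(a,b). \<L> (unit_mat q (a div n) (b div n)) $$ (a mod n, b mod n))"

definition mspan :: "nat \<Rightarrow> nat \<Rightarrow> ('i \<Rightarrow> 'a :: comm_ring_1 mat) \<Rightarrow> 'i set \<Rightarrow> 'a mat set" where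
  "mspan n q f I = {M \<in> carrier_mat n q. \<exists>c. M = msum n q (\<lambda>i. c i \<cdot>\<^sub>m f i) I}"

definition ones_vec :: "nat \<Rightarrow> 'a :: one vec" where
  "ones_vec p = vec p (\<lambda>i. 1)"

definition Amat :: "nat \<Rightarrow> nat \<Rightarrow> (nat \<Rightarrow> nat \<Rightarrow> nat \<Rightarrow> 'a :: conjugatable_field) \<Rightarrow> nat \<Rightarrow> 'a mat" where
  "Amat n q \<alpha> k = mat n q (\<lambda>(i,j). conjugate (\<alpha> i j k))"

definition Bmat :: "nat \<Rightarrow> nat \<Rightarrow> (nat \<Rightarrow> nat \<Rightarrow> nat \<Rightarrow> 'a) \<Rightarrow> nat \<Rightarrow> 'a mat" where
  "Bmat n q \<beta> k = mat n q (\<lambda>(i,j). \<beta> k i j)"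

definition Hmat :: "nat \<Rightarrow> nat \<Rightarrow> nat \<Rightarrow> (nat \<Rightarrow> 'a :: conjugatable_field mat)
     \<Rightarrow> (nat \<Rightarrow> nat \<Rightarrow> nat \<Rightarrow> 'a) \<Rightarrow> 'a mat" where
  "Hmat n q m Ls \<beta> = mat m m (\<lambda>(k,l).
      conjugate (ones_vec n) \<bullet> (hadamard (Bmat n q \<beta> k) (mconj (Ls l)) *\<^sub>v ones_vec q))"

definition Ahat_adj :: "nat \<Rightarrow> nat \<Rightarrow> nat \<Rightarrow> (nat \<Rightarrow> 'a mat) \<Rightarrow> 'a mat" where
  "Ahat_adj n q m A = mat_of_cols (n*q) (map (\<lambda>k. vecm (A k)) [0..<m])"

end

theory Submission
  imports Defs
begin

(* Write L_ij(r,s) for the entry L(i n + r, j q + s).  Star-linearity of the map makes L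
   conjugate-symmetric under swapping the block and the in-block index:
   L_ij(r,s) = conj (L_rs(i,j)).  Feeding the alpha-expansion of L_rs into the beta-expansion
   L_k = sum beta^k_ij L_ij therefore gives L_k = sum_l H_kl A_l, and substituting this back into
   L_ij = sum_k alpha^ij_k L_k yields L = sum_kl H_kl conj(A_k) (x) A_l.  The remaining
   representations are index bookkeeping on this one; the same symmetry makes H Hermitian.
   Finally the Choi matrix factors as Ahat^* H^T Ahat, so m = rank Choi forces H^T, hence H,
   to be nonsingular. *)

lemma conjugate_one [simp]: "conjugate (1 :: 'a :: conjugatable_field) = 1"
proof -
  have "conjugate (1::'a) * conjugate 1 = conjugate 1"
    by (metis conjugate_dist_mul mult_1)
  then show ?thesis by simp
qed

lemma mat_adjoint_dims [simp]:
  "dim_row (mat_adjoint A) = dim_col A" "dim_col (mat_adjoint A) = dim_row A"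
  unfolding mat_adjoint_def by auto

lemma mat_adjoint_carrier: "A \<in> carrier_mat a b \<Longrightarrow> mat_adjoint A \<in> carrier_mat b a"
  by (intro carrier_matI) auto

lemma index_mat_adjoint [simp]:
  "i < dim_col A \<Longrightarrow> j < dim_row A \<Longrightarrow> mat_adjoint A $$ (i,j) = conjugate (A $$ (j,i))"
  unfolding mat_adjoint_def by (simp add: mat_of_rows_index)

lemma mconj_carrier: "X \<in> carrier_mat a b \<Longrightarrow> mconj X \<in> carrier_mat a b"
  unfolding mconj_def by simp

lemma index_mconj: "X \<in> carrier_mat a b \<Longrightarrow> i < a \<Longrightarrow> j < b \<Longrightarrow> mconj X $$ (i,j) = conjugate (X $$ (i,j))"
  unfolding mconj_def by auto

lemma msum_carrier [simp]: "msum r c f I \<in> carrier_mat r c"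
  unfolding msum_def by simp

lemma msum_dims [simp]: "dim_row (msum r c f I) = r" "dim_col (msum r c f I) = c"
  unfolding msum_def by auto

lemma index_msum_smult_pairs:
  assumes "i < r" "j < c" "\<And>k l. M k l \<in> carrier_mat r c"
  shows "msum r c (\<lambda>(k,l). h k l \<cdot>\<^sub>m M k l) ({..<m} \<times> {..<m'}) $$ (i,j)
    = (\<Sum>k<m. \<Sum>l<m'. h k l * M k l $$ (i,j))"
proof -
  have "msum r c (\<lambda>(k,l). h k l \<cdot>\<^sub>m M k l) ({..<m} \<times> {..<m'}) $$ (i,j)
      = (\<Sum>(k,l)\<in>{..<m} \<times> {..<m'}. h k l * M k l $$ (i,j))"
    using assms(1,2) carrier_matD[OF assms(3)] by (auto simp: msum_def intro!: sum.cong)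
  then show ?thesis by (simp add: sum.cartesian_product)
qed

lemma index_mult_mat_lessThan:
  "A \<in> carrier_mat a b \<Longrightarrow> B \<in> carrier_mat b c \<Longrightarrow> i < a \<Longrightarrow> j < c \<Longrightarrow>
   (A * B) $$ (i,j) = (\<Sum>t<b. A $$ (i,t) * B $$ (t,j))"
  by (auto simp: scalar_prod_def lessThan_atLeast0 intro!: sum.cong)

lemma sum_lessThan_mult_blocks:
  fixes a b :: nat
  shows "(\<Sum>p<b*a. f p) = (\<Sum>j<b. \<Sum>s<a. f (j*a + s))"
proof (induction b)
  case (Suc b)
  have "{..<Suc b * a} = {..<b*a} \<union> {b*a..<b*a+a}" by auto
  then have "(\<Sum>p<Suc b*a. f p) = (\<Sum>p<b*a. f p) + (\<Sum>p\<in>{b*a..<b*a+a}. f p)"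
    by (simp add: sum.union_disjoint ivl_disj_int)
  also have "(\<Sum>p\<in>{b*a..<b*a+a}. f p) = (\<Sum>s<a. f (b*a+s))"
    using sum.shift_bounds_nat_ivl[of f 0 "b*a" a] by (simp add: lessThan_atLeast0 add.commute)
  finally show ?case using Suc by simp
qed simp

lemma sum_lessThan_swap_pairs:
  fixes f :: "nat \<Rightarrow> nat \<Rightarrow> nat \<Rightarrow> nat \<Rightarrow> 'a :: comm_monoid_add"
  shows "(\<Sum>j<a. \<Sum>s<b. \<Sum>k<c. \<Sum>l<d. f j s k l) = (\<Sum>k<c. \<Sum>l<d. \<Sum>j<a. \<Sum>s<b. f j s k l)"
proof -
  let ?K = "{..<c} \<times> {..<d}"
  have "(\<Sum>j<a. \<Sum>s<b. \<Sum>k<c. \<Sum>l<d. f j s k l) = (\<Sum>j<a. \<Sum>s<b. \<Sum>(k,l)\<in>?K. f j s k l)"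
    by (simp only: sum.cartesian_product)
  also have "\<dots> = (\<Sum>j<a. \<Sum>(k,l)\<in>?K. \<Sum>s<b. f j s k l)"
    unfolding case_prod_unfold by (rule sum.cong[OF refl], rule sum.swap)
  also have "\<dots> = (\<Sum>(k,l)\<in>?K. \<Sum>j<a. \<Sum>s<b. f j s k l)"
    unfolding case_prod_unfold by (rule sum.swap)
  also have "\<dots> = (\<Sum>k<c. \<Sum>l<d. \<Sum>j<a. \<Sum>s<b. f j s k l)"
    by (rule sum.cartesian_product[symmetric])
  finally show ?thesis .
qed

lemma block_index_less:
  fixes i r n :: nat
  assumes "i < c" "r < n"
  shows "i * n + r < c * n"
proof -
  have "i * n + r < (i + 1) * n" using assms(2) by simp
  also have "\<dots> \<le> c * n" using assms(1) by (intro mult_le_mono1) simp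
  finally show ?thesis .
qed

lemma eq_mat_blockI:
  assumes A: "A \<in> carrier_mat (a*n) (b*q)" and B: "B \<in> carrier_mat (a*n) (b*q)"
    and eq: "\<And>i j r s. i < a \<Longrightarrow> j < b \<Longrightarrow> r < n \<Longrightarrow> s < q \<Longrightarrow>
      A $$ (i*n+r, j*q+s) = B $$ (i*n+r, j*q+s)"
  shows "A = B"
proof (rule eq_matI)
  fix x y assume "x < dim_row B" "y < dim_col B"
  then have xy: "x < a*n" "y < b*q" using B by auto
  then have "0 < n" "0 < q" by (auto intro: gr0I)
  with xy have "x div n < a" "x mod n < n" "y div q < b" "y mod q < q"
    by (auto simp: less_mult_imp_div_less)
  from eq[OF this(1,3,2,4)] show "A $$ (x,y) = B $$ (x,y)" by simp
qed (use A B in auto)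

lemma dim_vecm [simp]: "dim_vec (vecm X) = dim_row X * dim_col X"
  unfolding vecm_def by auto

lemma vecm_index_block:
  assumes "X \<in> carrier_mat n c" "r < n" "i < c"
  shows "vecm X $ (i*n + r) = X $$ (r,i)"
  using assms block_index_less[OF assms(3,2)] unfolding vecm_def by (simp add: mult.commute)

lemma vecm_mconj_index_block:
  assumes "X \<in> carrier_mat n c" "r < n" "i < c"
  shows "vecm (mconj X) $ (i*n + r) = conjugate (X $$ (r,i))"
  using assms vecm_index_block[of "mconj X" n c r i] unfolding mconj_def by simp

lemma kron_carrier:
  "X \<in> carrier_mat a b \<Longrightarrow> Y \<in> carrier_mat n q \<Longrightarrow> kron X Y \<in> carrier_mat (a*n) (b*q)"
  unfolding kron_def by auto

lemma kron_index_block: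
  assumes "X \<in> carrier_mat a b" "Y \<in> carrier_mat n q" "i < a" "j < b" "r < n" "s < q"
  shows "kron X Y $$ (i*n+r, j*q+s) = X $$ (i,j) * Y $$ (r,s)"
  using assms block_index_less[of i a r n] block_index_less[of j b s q] unfolding kron_def by simp

lemma outer_carrier: "outer u v \<in> carrier_mat (dim_vec u) (dim_vec v)"
  unfolding outer_def by simp

lemma index_outer: "i < dim_vec u \<Longrightarrow> j < dim_vec v \<Longrightarrow> outer u v $$ (i,j) = u $ i * v $ j"
  unfolding outer_def by simp

lemma outer_vecm_carrier:
  assumes "X \<in> carrier_mat n q" "Y \<in> carrier_mat n q"
  shows "outer (vecm X) (vecm (mconj Y)) \<in> carrier_mat (n*q) (n*q)"
  using outer_carrier[of "vecm X" "vecm (mconj Y)"] assms mconj_carrier[OF assms(2)] by simp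

lemma unit_mat_carrier: "unit_mat q s j \<in> carrier_mat q q"
  unfolding unit_mat_def by simp

lemma matricization_apply_index:
  assumes matr: "is_matricization q n \<L> L" and V: "V \<in> carrier_mat q q"
    and LV: "\<L> V \<in> carrier_mat n n" and ri: "r < n" "i < n"
  shows "\<L> V $$ (r,i) = (\<Sum>j<q. \<Sum>s<q. L $$ (i*n+r, j*q+s) * V $$ (s,j))"
proof -
  have L: "L \<in> carrier_mat (n*n) (q*q)" and vec_eq: "L *\<^sub>v vecm V = vecm (\<L> V)"
    using matr V unfolding is_matricization_def by auto
  have row: "i*n+r < n*n" using block_index_less[OF ri(2,1)] .
  have "\<L> V $$ (r,i) = (L *\<^sub>v vecm V) $ (i*n+r)"
    using vecm_index_block[OF LV ri] vec_eq by simp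
  also have "\<dots> = (\<Sum>p<q*q. L $$ (i*n+r,p) * vecm V $ p)"
    using L V row by (auto simp: scalar_prod_def lessThan_atLeast0 intro!: sum.cong)
  also have "\<dots> = (\<Sum>j<q. \<Sum>s<q. L $$ (i*n+r, j*q+s) * vecm V $ (j*q+s))"
    by (rule sum_lessThan_mult_blocks)
  also have "\<dots> = (\<Sum>j<q. \<Sum>s<q. L $$ (i*n+r, j*q+s) * V $$ (s,j))"
    using V by (auto intro!: sum.cong simp: vecm_index_block)
  finally show ?thesis .
qed

lemma matricization_index_block:
  assumes lin: "is_linear_map q n \<L>" and matr: "is_matricization q n \<L> L"
    and "i < n" "j < q" "r < n" "s < q"
  shows "L $$ (i*n+r, j*q+s) = \<L> (unit_mat q s j) $$ (r,i)"
proof -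
  have "\<L> (unit_mat q s j) \<in> carrier_mat n n"
    using lin unit_mat_carrier unfolding is_linear_map_def by blast
  then have "\<L> (unit_mat q s j) $$ (r,i)
      = (\<Sum>j'<q. \<Sum>s'<q. L $$ (i*n+r, j'*q+s') * unit_mat q s j $$ (s',j'))"
    using matricization_apply_index[OF matr unit_mat_carrier] assms by blast
  also have "\<dots> = (\<Sum>j'<q. if j' = j then L $$ (i*n+r, j'*q+s) else 0)"
  proof (rule sum.cong[OF refl])
    fix j' assume "j' \<in> {..<q}"
    then show "(\<Sum>s'<q. L $$ (i*n+r, j'*q+s') * unit_mat q s j $$ (s',j'))
        = (if j' = j then L $$ (i*n+r, j'*q+s) else 0)"
      using \<open>s < q\<close>
      by (simp add: unit_mat_def if_distrib[where f="\<lambda>x. _ * x"] sum.delta' cong: if_cong)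
  qed
  also have "\<dots> = L $$ (i*n+r, j*q+s)"
    using \<open>j < q\<close> by simp
  finally show ?thesis by simp
qed

lemma star_linear_matricization_conjugate:
  assumes star: "star_linear q n \<L>" and matr: "is_matricization q n \<L> L"
    and "i < n" "r < n" "j < q" "s < q"
  shows "L $$ (i*n+r, j*q+s) = conjugate (L $$ (r*n+i, s*q+j))"
proof -
  have lin: "is_linear_map q n \<L>"
    and adj: "\<L> (mat_adjoint (unit_mat q j s)) = mat_adjoint (\<L> (unit_mat q j s))"
    using star unit_mat_carrier unfolding star_linear_def by auto
  have LE: "\<L> (unit_mat q j s) \<in> carrier_mat n n"
    using lin unit_mat_carrier unfolding is_linear_map_def by blast
  have adjE: "mat_adjoint (unit_mat q j s) = unit_mat q s j"
    using assms by (intro eq_matI) (auto simp: unit_mat_def)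
  have "L $$ (i*n+r, j*q+s) = \<L> (unit_mat q s j) $$ (r,i)"
    using matricization_index_block[OF lin matr] assms by blast
  also have "\<dots> = conjugate (\<L> (unit_mat q j s) $$ (i,r))"
    using adj LE assms by (simp add: adjE)
  also have "\<dots> = conjugate (L $$ (r*n+i, s*q+j))"
    using matricization_index_block[OF lin matr] assms by simp
  finally show ?thesis .
qed

lemma choi_carrier: "choi q n \<L> \<in> carrier_mat (q*n) (q*n)"
  unfolding choi_def by simp

lemma choi_index_block:
  assumes "i < q" "j < q" "r < n" "s < n"
  shows "choi q n \<L> $$ (i*n+r, j*n+s) = \<L> (unit_mat q i j) $$ (r,s)"
  using assms block_index_less[of i q r n] block_index_less[of j q s n] unfolding choi_def by simp

lemma kron_sum_index_block:
  assumes A: "\<And>k. A k \<in> carrier_mat n q" and "i < n" "j < q" "r < n" "s < q"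
  shows "msum (n*n) (q*q) (\<lambda>(k,l). H $$ (k,l) \<cdot>\<^sub>m kron (mconj (A k)) (A l)) ({..<m} \<times> {..<m})
      $$ (i*n+r, j*q+s) = (\<Sum>k<m. \<Sum>l<m. H $$ (k,l) * conjugate (A k $$ (i,j)) * A l $$ (r,s))"
proof -
  have "kron (mconj (A k)) (A l) \<in> carrier_mat (n*n) (q*q)" for k l
    using kron_carrier[OF mconj_carrier[OF A] A] .
  moreover have "i*n+r < n*n" "j*q+s < q*q"
    using block_index_less assms(2-5) by blast+
  ultimately show ?thesis
    using assms by (simp add: index_msum_smult_pairs kron_index_block[OF mconj_carrier[OF A] A]
        index_mconj[OF A] mult.assoc)
qed

lemma kron_sum_matricization_apply:
  assumes lin: "is_linear_map q n \<L>" and matr: "is_matricization q n \<L> L"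
    and A: "\<And>k. A k \<in> carrier_mat n q"
    and L_eq: "L = msum (n*n) (q*q) (\<lambda>(k,l). H $$ (k,l) \<cdot>\<^sub>m kron (mconj (A k)) (A l)) ({..<m} \<times> {..<m})"
    and V: "V \<in> carrier_mat q q"
  shows "\<L> V = msum n n (\<lambda>(k,l). H $$ (k,l) \<cdot>\<^sub>m (A l * V * mat_adjoint (A k))) ({..<m} \<times> {..<m})"
    (is "_ = ?S")
proof -
  have LV: "\<L> V \<in> carrier_mat n n"
    using lin V unfolding is_linear_map_def by blast
  have AV: "A l * V \<in> carrier_mat n q" for l
    using mult_carrier_mat[OF A V] .
  have adjA: "mat_adjoint (A k) \<in> carrier_mat q n" for k
    using mat_adjoint_carrier[OF A] .
  have AVA: "A l * V * mat_adjoint (A k) \<in> carrier_mat n n" for k l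
    using mult_carrier_mat[OF AV adjA] .
  have "\<L> V $$ (r,i) = ?S $$ (r,i)" if ri: "r < n" "i < n" for r i
  proof -
    have AVA_index: "(A l * V * mat_adjoint (A k)) $$ (r,i)
        = (\<Sum>j<q. \<Sum>s<q. A l $$ (r,s) * V $$ (s,j) * conjugate (A k $$ (i,j)))" for k l
      using ri by (simp add: index_mult_mat_lessThan[OF AV adjA] index_mult_mat_lessThan[OF A V]
          carrier_matD[OF A] sum_distrib_right del: index_mult_mat)
    have L_index: "L $$ (i*n+r, j*q+s) = (\<Sum>k<m. \<Sum>l<m. H $$ (k,l) * conjugate (A k $$ (i,j)) * A l $$ (r,s))"
      if "j < q" "s < q" for j s
      unfolding L_eq using kron_sum_index_block[OF A ri(2) that(1) ri(1) that(2)] .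
    have "\<L> V $$ (r,i) = (\<Sum>j<q. \<Sum>s<q. L $$ (i*n+r, j*q+s) * V $$ (s,j))"
      by (rule matricization_apply_index[OF matr V LV ri])
    also have "\<dots> = (\<Sum>j<q. \<Sum>s<q. \<Sum>k<m. \<Sum>l<m.
        H $$ (k,l) * (A l $$ (r,s) * V $$ (s,j) * conjugate (A k $$ (i,j))))"
      using ri by (intro sum.cong refl) (simp add: L_index sum_distrib_left sum_distrib_right mult_ac)
    also have "\<dots> = (\<Sum>k<m. \<Sum>l<m. \<Sum>j<q. \<Sum>s<q.
        H $$ (k,l) * (A l $$ (r,s) * V $$ (s,j) * conjugate (A k $$ (i,j))))"
      by (rule sum_lessThan_swap_pairs)
    also have "\<dots> = (\<Sum>k<m. \<Sum>l<m. H $$ (k,l) * (A l * V * mat_adjoint (A k)) $$ (r,i))"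
      by (simp add: AVA_index sum_distrib_left)
    also have "\<dots> = ?S $$ (r,i)"
      using ri AVA by (simp add: index_msum_smult_pairs)
    finally show ?thesis .
  qed
  then show ?thesis
    using LV by (intro eq_matI) auto
qed

lemma outer_sum_index_block:
  assumes A: "\<And>k. A k \<in> carrier_mat n q" and jtrs: "j < q" "t < q" "r < n" "s < n"
  shows "msum (n*q) (n*q) (\<lambda>(k,l). H $$ (k,l) \<cdot>\<^sub>m outer (vecm (A l)) (vecm (mconj (A k)))) ({..<m} \<times> {..<m})
      $$ (j*n+r, t*n+s) = (\<Sum>k<m. \<Sum>l<m. H $$ (k,l) * (A l $$ (r,j) * conjugate (A k $$ (s,t))))"
proof -
  have "j*n+r < n*q" "t*n+s < n*q"
    using block_index_less jtrs by (metis mult.commute)+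
  then show ?thesis
    using jtrs outer_vecm_carrier[OF A A] carrier_matD[OF A] carrier_matD[OF mconj_carrier[OF A]]
    by (simp add: index_msum_smult_pairs index_outer vecm_index_block[OF A] vecm_mconj_index_block[OF A])
qed

lemma kron_sum_choi:
  assumes lin: "is_linear_map q n \<L>" and matr: "is_matricization q n \<L> L"
    and A: "\<And>k. A k \<in> carrier_mat n q"
    and L_eq: "L = msum (n*n) (q*q) (\<lambda>(k,l). H $$ (k,l) \<cdot>\<^sub>m kron (mconj (A k)) (A l)) ({..<m} \<times> {..<m})"
  shows "choi q n \<L>
    = msum (n*q) (n*q) (\<lambda>(k,l). H $$ (k,l) \<cdot>\<^sub>m outer (vecm (A l)) (vecm (mconj (A k)))) ({..<m} \<times> {..<m})"
    (is "_ = ?S")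
proof (rule eq_mat_blockI)
  show "choi q n \<L> \<in> carrier_mat (q*n) (q*n)" by (rule choi_carrier)
  show "?S \<in> carrier_mat (q*n) (q*n)" by (intro carrier_matI) (simp_all add: mult.commute)
  fix j t r s assume jtrs: "j < q" "t < q" "r < n" "s < n"
  have "?S $$ (j*n+r, t*n+s) = (\<Sum>k<m. \<Sum>l<m. H $$ (k,l) * (A l $$ (r,j) * conjugate (A k $$ (s,t))))"
    by (rule outer_sum_index_block[OF A jtrs])
  also have "\<dots> = L $$ (s*n+r, t*q+j)"
    unfolding L_eq using kron_sum_index_block[OF A, where i=s and j=t and r=r and s=j] jtrs by (simp add: mult_ac)
  also have "\<dots> = \<L> (unit_mat q j t) $$ (r,s)"
    using matricization_index_block[OF lin matr] jtrs by simp
  also have "\<dots> = choi q n \<L> $$ (j*n+r, t*n+s)"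
    by (rule choi_index_block[OF jtrs, symmetric])
  finally show "choi q n \<L> $$ (j*n+r, t*n+s) = ?S $$ (j*n+r, t*n+s)" ..
qed

lemma Ahat_adj_carrier: "Ahat_adj n q m A \<in> carrier_mat (n*q) m"
  unfolding Ahat_adj_def by (intro carrier_matI) simp_all

lemma Ahat_adj_factorization:
  assumes A: "\<And>k. A k \<in> carrier_mat n q" and H: "H \<in> carrier_mat m m"
  shows "Ahat_adj n q m A * transpose_mat H * mat_adjoint (Ahat_adj n q m A)
    = msum (n*q) (n*q) (\<lambda>(k,l). H $$ (k,l) \<cdot>\<^sub>m outer (vecm (A l)) (vecm (mconj (A k)))) ({..<m} \<times> {..<m})"
    (is "?U * _ * _ = ?S")
proof (rule eq_mat_blockI)
  have U: "?U \<in> carrier_mat (n*q) m"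
    by (rule Ahat_adj_carrier)
  have UH: "?U * transpose_mat H \<in> carrier_mat (n*q) m"
    using U H by simp
  have adjU: "mat_adjoint ?U \<in> carrier_mat m (n*q)"
    using mat_adjoint_carrier[OF U] .
  show "?U * transpose_mat H * mat_adjoint ?U \<in> carrier_mat (q*n) (q*n)"
    using U UH adjU by (intro carrier_matI) (simp_all add: mult.commute)
  show "?S \<in> carrier_mat (q*n) (q*n)" by (intro carrier_matI) (simp_all add: mult.commute)
  fix j t r s assume jtrs: "j < q" "t < q" "r < n" "s < n"
  then have x: "j*n+r < n*q" and y: "t*n+s < n*q"
    using block_index_less by (metis mult.commute)+
  have U_index: "?U $$ (x,k) = vecm (A k) $ x" if "x < n*q" "k < m" for x k
    using that unfolding Ahat_adj_def by (simp add: mat_of_cols_index)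
  have "(?U * transpose_mat H * mat_adjoint ?U) $$ (j*n+r, t*n+s)
      = (\<Sum>l<m. (\<Sum>k<m. vecm (A k) $ (j*n+r) * H $$ (l,k)) * conjugate (vecm (A l) $ (t*n+s)))"
    using x y U H by (simp add: index_mult_mat_lessThan[OF UH adjU] index_mult_mat_lessThan[OF U]
        U_index del: index_mult_mat)
  also have "\<dots> = (\<Sum>l<m. \<Sum>k<m. H $$ (l,k) * (A k $$ (r,j) * conjugate (A l $$ (s,t))))"
    by (simp only: vecm_index_block[OF A] jtrs) (simp add: sum_distrib_left sum_distrib_right mult_ac)
  also have "\<dots> = ?S $$ (j*n+r, t*n+s)"
    using outer_sum_index_block[OF A jtrs] by simp
  finally show "(?U * transpose_mat H * mat_adjoint ?U) $$ (j*n+r, t*n+s) = ?S $$ (j*n+r, t*n+s)" .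
qed

context vec_space
begin

lemma rank_mult_le:
  assumes P: "P \<in> carrier_mat n m" and Q: "Q \<in> carrier_mat m k"
  shows "rank (P * Q) \<le> rank P"
proof -
  have cP: "set (cols P) \<subseteq> carrier_vec n"
    using P cols_dim by blast
  have cPQ: "set (cols (P * Q)) \<subseteq> carrier_vec n"
    using P Q cols_dim by (metis carrier_matD(1) index_mult_mat(2))
  have "set (cols (P * Q)) \<subseteq> span (set (cols P))"
  proof
    fix w assume "w \<in> set (cols (P * Q))"
    then obtain j where j: "j < k" "w = col (P * Q) j"
      using P Q by (metis cols_length cols_nth in_set_conv_nth carrier_matD(2) index_mult_mat(3))
    then have "w = P *\<^sub>v col Q j"
      using col_mult2[OF P Q j(1)] by simp
    also have "\<dots> = mat_of_cols n (cols P) *\<^sub>v vec (length (cols P)) (\<lambda>i. col Q j $ i)"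
      using P Q by (intro arg_cong2[where f = "(*\<^sub>v)"]) (auto intro!: eq_vecI)
    also have "\<dots> = lincomb_list (\<lambda>i. col Q j $ i) (cols P)"
      using cP by (subst lincomb_list_as_mat_mult) auto
    also have "\<dots> \<in> span_list (cols P)"
      by (intro in_span_listI) auto
    finally show "w \<in> span (set (cols P))"
      using span_list_as_span[OF cP] by simp
  qed
  then have incl: "span (set (cols (P * Q))) \<subseteq> span (set (cols P))"
    using span_subsetI[OF cP] by blast
  have sP: "VectorSpace.subspace class_ring (span (set (cols P))) V"
    using cP span_is_subspace by auto
  have sPQ: "VectorSpace.subspace class_ring (span (set (cols (P * Q)))) V"
    using cPQ span_is_subspace by auto
  have "vectorspace.fin_dim class_ring (vs (span (set (cols (P * Q)))))"
    using fin_dim_span_cols[of "P * Q" k] P Q by auto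
  then show ?thesis
    unfolding rank_def
    using vectorspace.subspace_dim[OF subspace_is_vs[OF sP] nested_subspaces[OF sP sPQ incl]
        fin_dim_span_cols[OF P]]
    by auto
qed

lemma rank_le_card_set_cols:
  assumes P: "P \<in> carrier_mat n m"
  shows "rank P \<le> card (set (cols P))"
proof -
  obtain S where S: "maximal S (\<lambda>T. T \<subseteq> set (cols P) \<and> lin_indpt T)"
    using maximal_exists[of "\<lambda>T. T \<subseteq> set (cols P) \<and> lin_indpt T" "card (set (cols P))" "{}"]
    by (meson List.finite_set card_mono empty_iff empty_subsetI finite_lin_indpt2 rev_finite_subset)
  then have "card S \<le> card (set (cols P))"
    by (simp add: card_mono maximal_def)
  then show ?thesis
    using rank_card_indpt[OF P S] by simp
qed

lemma rank_less_if_kernel: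
  assumes P: "P \<in> carrier_mat n m"
    and v: "v \<in> carrier_vec m" "v \<noteq> 0\<^sub>v m" "P *\<^sub>v v = 0\<^sub>v n"
  shows "rank P < m"
proof (cases "distinct (cols P)")
  case True
  then have "rank P \<noteq> m"
    using full_rank_lin_indpt[OF P] lin_depI[OF P v True] by blast
  then show ?thesis
    using rank_le_nc[OF P] by simp
next
  case False
  then have "card (set (cols P)) < m"
    using P card_distinct card_length le_neq_implies_less by (metis cols_length carrier_matD(2))
  then show ?thesis
    using rank_le_card_set_cols[OF P] by simp
qed

end

lemma det_nonzero_if_rank_factor:
  fixes M :: "'a :: field mat"
  assumes P: "P \<in> carrier_mat N m" and M: "M \<in> carrier_mat m m" and Q: "Q \<in> carrier_mat m k"
    and rank: "m \<le> vec_space.rank N (P * M * Q)"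
  shows "det M \<noteq> 0"
proof
  assume "det M = 0"
  then obtain v where v: "v \<in> carrier_vec m" "v \<noteq> 0\<^sub>v m" "M *\<^sub>v v = 0\<^sub>v m"
    using det_0_iff_vec_prod_zero_field[OF M] by blast
  have PM: "P * M \<in> carrier_mat N m"
    using P M by simp
  have "(P * M) *\<^sub>v v = P *\<^sub>v (M *\<^sub>v v)"
    using P M v(1) by (rule assoc_mult_mat_vec)
  also have "\<dots> = 0\<^sub>v N"
    using P unfolding v(3) by (intro eq_vecI) (auto simp: scalar_prod_def)
  finally have "vec_space.rank N (P * M) < m"
    using vec_space.rank_less_if_kernel[OF PM v(1,2)] by blast
  moreover have "vec_space.rank N (P * M * Q) \<le> vec_space.rank N (P * M)"
    by (rule vec_space.rank_mult_le[OF PM Q])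
  ultimately show False
    using rank by simp
qed

lemma invertible_mat_if_det_nonzero:
  fixes M :: "'a :: field mat"
  assumes M: "M \<in> carrier_mat m m" and det: "det M \<noteq> 0"
  shows "invertible_mat M"
proof -
  obtain B where "B \<in> carrier_mat m m" "B * M = 1\<^sub>m m" "M * B = 1\<^sub>m m"
    using det_non_zero_imp_unit[OF M det] unfolding Units_def ring_mat_def by auto
  then show ?thesis
    using M unfolding invertible_mat_def inverts_mat_def by auto
qed

lemma Amat_carrier: "Amat n q \<alpha> k \<in> carrier_mat n q"
  unfolding Amat_def by simp

lemma index_Amat: "r < n \<Longrightarrow> s < q \<Longrightarrow> Amat n q \<alpha> k $$ (r,s) = conjugate (\<alpha> r s k)"
  unfolding Amat_def by simp

lemma Hmat_carrier: "Hmat n q m Ls \<beta> \<in> carrier_mat m m"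
  unfolding Hmat_def by simp

lemma index_Hmat:
  assumes "k < m" "l < m" "Ls l \<in> carrier_mat n q"
  shows "Hmat n q m Ls \<beta> $$ (k,l)
    = (\<Sum>(i,j)\<in>{..<n} \<times> {..<q}. \<beta> k i j * conjugate (Ls l $$ (i,j)))"
  using assms unfolding Hmat_def
  by (auto simp: scalar_prod_def hadamard_def Bmat_def mconj_def ones_vec_def lessThan_atLeast0
      sum.cartesian_product intro!: sum.cong)

locale star_linear_block_expansion =
  fixes \<L> :: "'a :: conjugatable_field mat \<Rightarrow> 'a mat" and L :: "'a mat" and q n m :: nat
    and Ls :: "nat \<Rightarrow> 'a mat" and \<alpha> \<beta> :: "nat \<Rightarrow> nat \<Rightarrow> nat \<Rightarrow> 'a"
  assumes star_linear: "star_linear q n \<L>"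
    and matricization: "is_matricization q n \<L> L"
    and Ls_carrier: "\<forall>k<m. Ls k \<in> carrier_mat n q"
    and blk_expansion: "\<forall>i<n. \<forall>j<q. blk n q L i j = msum n q (\<lambda>k. \<alpha> i j k \<cdot>\<^sub>m Ls k) {..<m}"
    and Ls_expansion: "\<forall>k<m. Ls k = msum n q (\<lambda>(i,j). \<beta> k i j \<cdot>\<^sub>m blk n q L i j) ({..<n} \<times> {..<q})"
begin

lemma linear: "is_linear_map q n \<L>"
  using star_linear unfolding star_linear_def by blast

lemma L_carrier: "L \<in> carrier_mat (n*n) (q*q)"
  using matricization unfolding is_matricization_def by blast

lemma L_index_alpha:
  assumes "i < n" "j < q" "r < n" "s < q"
  shows "L $$ (i*n+r, j*q+s) = (\<Sum>k<m. \<alpha> i j k * Ls k $$ (r,s))"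
proof -
  have "L $$ (i*n+r, j*q+s) = blk n q L i j $$ (r,s)"
    using assms unfolding blk_def by simp
  then show ?thesis
    using blk_expansion Ls_carrier assms by (auto simp: msum_def intro!: sum.cong)
qed

lemma Ls_index_beta:
  assumes "k < m" "r < n" "s < q"
  shows "Ls k $$ (r,s) = (\<Sum>(i,j)\<in>{..<n} \<times> {..<q}. \<beta> k i j * L $$ (i*n+r, j*q+s))"
proof -
  have "Ls k $$ (r,s) = msum n q (\<lambda>(i,j). \<beta> k i j \<cdot>\<^sub>m blk n q L i j) ({..<n} \<times> {..<q}) $$ (r,s)"
    using Ls_expansion assms by simp
  also have "\<dots> = (\<Sum>(i,j)\<in>{..<n} \<times> {..<q}. \<beta> k i j * L $$ (i*n+r, j*q+s))"
    using assms by (auto simp: msum_def blk_def intro!: sum.cong)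
  finally show ?thesis .
qed

lemma L_index_conjugate_alpha:
  assumes "i < n" "j < q" "r < n" "s < q"
  shows "L $$ (i*n+r, j*q+s) = (\<Sum>l<m. Amat n q \<alpha> l $$ (r,s) * conjugate (Ls l $$ (i,j)))"
proof -
  have "L $$ (i*n+r, j*q+s) = conjugate (L $$ (r*n+i, s*q+j))"
    using star_linear_matricization_conjugate[OF star_linear matricization] assms by blast
  also have "\<dots> = conjugate (\<Sum>l<m. \<alpha> r s l * Ls l $$ (i,j))"
    using L_index_alpha assms by simp
  finally show ?thesis
    using assms by (simp add: sum_conjugate conjugate_dist_mul index_Amat)
qed

lemma Ls_index_Hmat_Amat:
  assumes "k < m" "r < n" "s < q"
  shows "Ls k $$ (r,s) = (\<Sum>l<m. Hmat n q m Ls \<beta> $$ (k,l) * Amat n q \<alpha> l $$ (r,s))"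
proof -
  have "Ls k $$ (r,s) = (\<Sum>(i,j)\<in>{..<n} \<times> {..<q}. \<Sum>l<m.
      \<beta> k i j * conjugate (Ls l $$ (i,j)) * Amat n q \<alpha> l $$ (r,s))"
    using assms by (auto simp: Ls_index_beta L_index_conjugate_alpha sum_distrib_left mult_ac intro!: sum.cong)
  also have "\<dots> = (\<Sum>l<m. \<Sum>(i,j)\<in>{..<n} \<times> {..<q}.
      \<beta> k i j * conjugate (Ls l $$ (i,j)) * Amat n q \<alpha> l $$ (r,s))"
    unfolding case_prod_unfold by (rule sum.swap)
  also have "\<dots> = (\<Sum>l<m. Hmat n q m Ls \<beta> $$ (k,l) * Amat n q \<alpha> l $$ (r,s))"
    using assms Ls_carrier by (auto simp: index_Hmat sum_distrib_right case_prod_unfold intro!: sum.cong)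
  finally show ?thesis .
qed

lemma L_eq_kron_sum:
  "L = msum (n*n) (q*q) (\<lambda>(k,l). Hmat n q m Ls \<beta> $$ (k,l) \<cdot>\<^sub>m
      kron (mconj (Amat n q \<alpha> k)) (Amat n q \<alpha> l)) ({..<m} \<times> {..<m})"
    (is "_ = ?S")
proof (rule eq_mat_blockI)
  show "L \<in> carrier_mat (n*n) (q*q)" by (rule L_carrier)
  show "?S \<in> carrier_mat (n*n) (q*q)" by simp
  fix i j r s assume ijrs: "i < n" "j < q" "r < n" "s < q"
  have "L $$ (i*n+r, j*q+s) = (\<Sum>k<m. \<Sum>l<m.
      Hmat n q m Ls \<beta> $$ (k,l) * conjugate (Amat n q \<alpha> k $$ (i,j)) * Amat n q \<alpha> l $$ (r,s))"
    using ijrs by (simp add: L_index_alpha Ls_index_Hmat_Amat index_Amat sum_distrib_left mult_ac)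
  also have "\<dots> = ?S $$ (i*n+r, j*q+s)"
    using kron_sum_index_block[where A = "Amat n q \<alpha>", OF Amat_carrier ijrs] by simp
  finally show "L $$ (i*n+r, j*q+s) = ?S $$ (i*n+r, j*q+s)" .
qed

lemma conjugate_Ls_index_beta:
  assumes "l < m" "a < n" "b < q"
  shows "conjugate (Ls l $$ (a,b))
    = (\<Sum>(i,j)\<in>{..<n} \<times> {..<q}. conjugate (\<beta> l i j) * L $$ (a*n+i, b*q+j))"
proof -
  have "conjugate (Ls l $$ (a,b))
      = (\<Sum>(i,j)\<in>{..<n} \<times> {..<q}. conjugate (\<beta> l i j) * conjugate (L $$ (i*n+a, j*q+b)))"
    using assms by (simp add: Ls_index_beta sum_conjugate conjugate_dist_mul case_prod_unfold)
  also have "\<dots> = (\<Sum>(i,j)\<in>{..<n} \<times> {..<q}. conjugate (\<beta> l i j) * L $$ (a*n+i, b*q+j))"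
  proof (rule sum.cong[OF refl], clarify)
    fix i j assume "i < n" "j < q"
    then show "conjugate (\<beta> l i j) * conjugate (L $$ (i*n+a, j*q+b))
        = conjugate (\<beta> l i j) * L $$ (a*n+i, b*q+j)"
      using star_linear_matricization_conjugate[OF star_linear matricization, of a i b j] assms by simp
  qed
  finally show ?thesis .
qed

lemma Hmat_hermitian: "mat_adjoint (Hmat n q m Ls \<beta>) = Hmat n q m Ls \<beta>"
proof (rule eq_matI)
  let ?I = "{..<n} \<times> {..<q}"
  let ?H = "Hmat n q m Ls \<beta>"
  fix k l assume "k < dim_row ?H" "l < dim_col ?H"
  then have kl: "k < m" "l < m"
    unfolding Hmat_def by simp_all
  have "mat_adjoint ?H $$ (k,l) = (\<Sum>(i,j)\<in>?I. conjugate (\<beta> l i j) * Ls k $$ (i,j))"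
    using kl Ls_carrier
    by (simp add: carrier_matD[OF Hmat_carrier] index_Hmat sum_conjugate conjugate_dist_mul case_prod_unfold)
  also have "\<dots> = (\<Sum>(i,j)\<in>?I. \<Sum>(a,b)\<in>?I. conjugate (\<beta> l i j) * (\<beta> k a b * L $$ (a*n+i, b*q+j)))"
  proof (rule sum.cong[OF refl], clarify)
    fix i j assume "i < n" "j < q"
    then show "conjugate (\<beta> l i j) * Ls k $$ (i,j)
        = (\<Sum>(a,b)\<in>?I. conjugate (\<beta> l i j) * (\<beta> k a b * L $$ (a*n+i, b*q+j)))"
      using kl by (simp add: Ls_index_beta sum_distrib_left case_prod_unfold)
  qed
  also have "\<dots> = (\<Sum>(a,b)\<in>?I. \<Sum>(i,j)\<in>?I. conjugate (\<beta> l i j) * (\<beta> k a b * L $$ (a*n+i, b*q+j)))"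
    unfolding case_prod_unfold by (rule sum.swap)
  also have "\<dots> = (\<Sum>(a,b)\<in>?I. \<beta> k a b * conjugate (Ls l $$ (a,b)))"
  proof (rule sum.cong[OF refl], clarify)
    fix a b assume "a < n" "b < q"
    then show "(\<Sum>(i,j)\<in>?I. conjugate (\<beta> l i j) * (\<beta> k a b * L $$ (a*n+i, b*q+j)))
        = \<beta> k a b * conjugate (Ls l $$ (a,b))"
      using kl by (simp add: conjugate_Ls_index_beta sum_distrib_left case_prod_unfold mult.left_commute)
  qed
  also have "\<dots> = ?H $$ (k,l)"
    using kl Ls_carrier by (simp add: index_Hmat)
  finally show "mat_adjoint ?H $$ (k,l) = ?H $$ (k,l)" .
qed (simp_all add: carrier_matD[OF Hmat_carrier])

end

theorem theorem5p1:
  fixes \<L> :: "'a :: conjugatable_field mat \<Rightarrow> 'a mat"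
    and L :: "'a mat" and q n m :: nat
    and Ls :: "nat \<Rightarrow> 'a mat"
    and \<alpha> :: "nat \<Rightarrow> nat \<Rightarrow> nat \<Rightarrow> 'a"
    and \<beta> :: "nat \<Rightarrow> nat \<Rightarrow> nat \<Rightarrow> 'a"
  assumes starlin: "star_linear q n \<L>"
    and matr: "is_matricization q n \<L> L"
    and m_def: "m = vec_space.rank (q*n) (choi q n \<L>)"
    and Ls_carrier: "\<forall>k<m. Ls k \<in> carrier_mat n q"
    and Ls_span: "mspan n q Ls {..<m} = mspan n q (\<lambda>(i,j). blk n q L i j) ({..<n} \<times> {..<q})"
    and alpha: "\<forall>i<n. \<forall>j<q. blk n q L i j = msum n q (\<lambda>k. \<alpha> i j k \<cdot>\<^sub>m Ls k) {..<m}"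
    and beta: "\<forall>k<m. Ls k = msum n q (\<lambda>(i,j). \<beta> k i j \<cdot>\<^sub>m blk n q L i j) ({..<n} \<times> {..<q})"
  defines "A \<equiv> Amat n q \<alpha>"
    and "H \<equiv> Hmat n q m Ls \<beta>"
  shows "(\<forall>V \<in> carrier_mat q q.
            \<L> V = msum n n (\<lambda>(k,l). H $$ (k,l) \<cdot>\<^sub>m (A l * V * mat_adjoint (A k))) ({..<m} \<times> {..<m}))
       \<and> L = msum (n*n) (q*q) (\<lambda>(k,l). H $$ (k,l) \<cdot>\<^sub>m kron (mconj (A k)) (A l)) ({..<m} \<times> {..<m})
       \<and> choi q n \<L> = msum (n*q) (n*q)
            (\<lambda>(k,l). H $$ (k,l) \<cdot>\<^sub>m outer (vecm (A l)) (vecm (mconj (A k)))) ({..<m} \<times> {..<m})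
       \<and> choi q n \<L> = Ahat_adj n q m A * transpose_mat H * mat_adjoint (Ahat_adj n q m A)
       \<and> mat_adjoint H = H
       \<and> invertible_mat H"
proof -
  interpret star_linear_block_expansion \<L> L q n m Ls \<alpha> \<beta>
    using starlin matr Ls_carrier alpha beta by unfold_locales
  have A: "\<And>k. A k \<in> carrier_mat n q" and H: "H \<in> carrier_mat m m"
    unfolding A_def H_def by (rule Amat_carrier, rule Hmat_carrier)
  have kron: "L = msum (n*n) (q*q) (\<lambda>(k,l). H $$ (k,l) \<cdot>\<^sub>m kron (mconj (A k)) (A l)) ({..<m} \<times> {..<m})"
    unfolding A_def H_def by (rule L_eq_kron_sum)
  note choi_outer = kron_sum_choi[OF linear matricization A kron]
  have choi_factor: "choi q n \<L> = Ahat_adj n q m A * transpose_mat H * mat_adjoint (Ahat_adj n q m A)"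
    unfolding choi_outer Ahat_adj_factorization[OF A H] ..
  have "vec_space.rank (n*q) (Ahat_adj n q m A * transpose_mat H * mat_adjoint (Ahat_adj n q m A)) = m"
    by (subst choi_factor[symmetric]) (simp add: m_def mult.commute)
  then have "det (transpose_mat H) \<noteq> 0"
    using det_nonzero_if_rank_factor[OF Ahat_adj_carrier[of n q m A] transpose_carrier_mat[THEN iffD2, OF H]
        mat_adjoint_carrier[OF Ahat_adj_carrier[of n q m A]]] by simp
  then have "invertible_mat H"
    using invertible_mat_if_det_nonzero[OF H] det_transpose[OF H] by simp
  then show ?thesis
    using kron_sum_matricization_apply[OF linear matricization A kron] kron choi_outer choi_factor
      Hmat_hermitian unfolding H_def by blast
qed

end
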